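(* Let $R$ be a dp-finite ring such that $R/\mathfrak{m}$ is infinite for every maximal ideal $\mathfrak{m}$ of $R$. Then $\mathrm{br}(R)\le\mathrm{dp\text{-}rk}(R)$; in particular, $\mathrm{br}(R)$ is finite.
   Context: Rings are commutative and unital; $\mathrm{dp\text{-}rk}(R)$ denotes the dp-rank of the structure $(R,+,\cdot)$, and $R$ is dp-finite if this is finite. The breadth $\mathrm{br}(R)$ satisfies $\mathrm{br}(R)\le n$ iff for any $x_1,\ldots,x_{n+1}\in R$ there is $i$ such that the ideal generated by $x_1,\ldots,x_{n+1}$ equals the ideal generated by $\{x_j:j\neq i\}$. *)

theory Defs
  imports Main
begin

datatype rterm = RVar nat | RAdd rterm rterm | RMul rterm rterm

datatype rform = REq rterm rterm | RNeg rform | RConj rform rform | RExists nat rform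

fun teval :: "(nat \<Rightarrow> 'a::comm_ring_1) \<Rightarrow> rterm \<Rightarrow> 'a" where
  "teval e (RVar v) = e v"
| "teval e (RAdd s t) = teval e s + teval e t"
| "teval e (RMul s t) = teval e s * teval e t"

fun sat :: "(nat \<Rightarrow> 'a::comm_ring_1) \<Rightarrow> rform \<Rightarrow> bool" where
  "sat e (REq s t) = (teval e s = teval e t)"
| "sat e (RNeg f) = (\<not> sat e f)"
| "sat e (RConj f g) = (sat e f \<and> sat e g)"
| "sat e (RExists v f) = (\<exists>a. sat (e(v := a)) f)"

text \<open>An ict-pattern of depth n in the home sort (object variable = variable 0,
  parameter variables = all others), in the compactness form: for every finite m
  the pattern of width m is realized in the structure itself.\<close>

definition ict_pattern :: "'a::comm_ring_1 itself \<Rightarrow> nat \<Rightarrow> bool" where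
  "ict_pattern TYPE('a) n \<longleftrightarrow>
     (\<exists>\<phi> :: nat \<Rightarrow> rform. \<forall>m::nat. \<exists>b :: nat \<Rightarrow> nat \<Rightarrow> nat \<Rightarrow> 'a.
        \<forall>\<eta> :: nat \<Rightarrow> nat. (\<forall>i<n. \<eta> i < m) \<longrightarrow>
          (\<exists>a::'a. \<forall>i<n. \<forall>j<m. (sat ((b i j)(0 := a)) (\<phi> i) \<longleftrightarrow> j = \<eta> i)))"

definition dp_finite :: "'a::comm_ring_1 itself \<Rightarrow> bool" where
  "dp_finite T \<longleftrightarrow> (\<exists>N. \<forall>n. ict_pattern T n \<longrightarrow> n \<le> N)"

text \<open>dp-rank = supremum of depths of ict-patterns (meaningful when dp-finite).\<close>
definition dp_rank :: "'a::comm_ring_1 itself \<Rightarrow> nat" where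
  "dp_rank T = (GREATEST n. ict_pattern T n)"

definition is_ideal :: "'a::comm_ring_1 set \<Rightarrow> bool" where
  "is_ideal I \<longleftrightarrow> 0 \<in> I \<and> (\<forall>x\<in>I. \<forall>y\<in>I. x + y \<in> I) \<and> (\<forall>r. \<forall>x\<in>I. r * x \<in> I)"

definition maximal_ideal :: "'a::comm_ring_1 set \<Rightarrow> bool" where
  "maximal_ideal M \<longleftrightarrow> is_ideal M \<and> M \<noteq> UNIV \<and>
     (\<forall>J. is_ideal J \<and> M \<subseteq> J \<longrightarrow> J = M \<or> J = UNIV)"

definition gen_ideal :: "'a::comm_ring_1 set \<Rightarrow> 'a set" where
  "gen_ideal S = \<Inter>{I. is_ideal I \<and> S \<subseteq> I}"

definition quotient_ring_set :: "'a::comm_ring_1 set \<Rightarrow> 'a set set" where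
  "quotient_ring_set M = UNIV // {(x, y). x - y \<in> M}"

definition breadth_le :: "'a::comm_ring_1 itself \<Rightarrow> nat \<Rightarrow> bool" where
  "breadth_le T n \<longleftrightarrow>
     (\<forall>x :: nat \<Rightarrow> 'a. \<exists>i\<le>n.
        gen_ideal (x ` {0..n}) = gen_ideal (x ` ({0..n} - {i})))"

end

theory Submission
  imports Defs
begin

text \<open>If the breadth exceeds n = dp-rk(R), there are x_0, ..., x_n such that no x_i lies in
  the ideal I_i generated by the others. The colon ideal (I_i : x_i) is proper, so it lies in a
  maximal ideal with infinite residue field, and there are elements c_ij (j = 0, 1, ...)
  pairwise incongruent modulo (I_i : x_i). Then a = \<Sum>_t c_(t,\<eta>(t)) x_t lies in the coset
  c_ij x_i + I_i exactly when j = \<eta>(i). Hence the formula y \<in> w + (z_0, ..., z_n) yields an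
  ict-pattern of depth n + 1, contradicting the dp-rank.\<close>

lemma is_ideal_sum:
  assumes "is_ideal J" "\<And>t. t \<in> T \<Longrightarrow> f t \<in> J"
  shows "sum f T \<in> J"
proof (cases "finite T")
  case True
  then show ?thesis
    using assms(2) by induction (use assms(1) in \<open>auto simp: is_ideal_def\<close>)
next
  case False
  then show ?thesis using assms(1) by (simp add: is_ideal_def)
qed

lemma is_ideal_diff:
  assumes "is_ideal J" "u \<in> J" "v \<in> J"
  shows "u - v \<in> J"
proof -
  have "u + (-1) * v \<in> J" using assms unfolding is_ideal_def by blast
  then show ?thesis by simp
qed

lemma is_ideal_colon:
  assumes "is_ideal I"
  shows "is_ideal {c. c * x \<in> I}"
  using assms unfolding is_ideal_def by (auto simp: distrib_right mult.assoc)

lemma coset_eq_iff: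
  assumes "is_ideal I" "a - c' * x \<in> I"
  shows "a - c * x \<in> I \<longleftrightarrow> (c' - c) * x \<in> I"
proof
  assume "a - c * x \<in> I"
  from is_ideal_diff[OF assms(1) this assms(2)] show "(c' - c) * x \<in> I"
    by (simp add: algebra_simps)
next
  assume "(c' - c) * x \<in> I"
  then have "(a - c' * x) + (c' - c) * x \<in> I" using assms unfolding is_ideal_def by blast
  then show "a - c * x \<in> I" by (simp add: algebra_simps)
qed

lemma gen_ideal_is_ideal: "is_ideal (gen_ideal S)"
  unfolding gen_ideal_def is_ideal_def by blast

lemma gen_ideal_superset: "S \<subseteq> gen_ideal S"
  unfolding gen_ideal_def by blast

lemma gen_ideal_least: "is_ideal J \<Longrightarrow> S \<subseteq> J \<Longrightarrow> gen_ideal S \<subseteq> J"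
  unfolding gen_ideal_def by blast

lemma gen_ideal_mono: "S \<subseteq> T \<Longrightarrow> gen_ideal S \<subseteq> gen_ideal T"
  unfolding gen_ideal_def by blast

lemma gen_ideal_insert_absorb:
  assumes "a \<in> gen_ideal S"
  shows "gen_ideal (insert a S) = gen_ideal S"
proof
  show "gen_ideal (insert a S) \<subseteq> gen_ideal S"
    using assms gen_ideal_superset by (intro gen_ideal_least[OF gen_ideal_is_ideal]) blast
qed (rule gen_ideal_mono, blast)

definition lin_combs :: "(nat \<Rightarrow> 'a::comm_ring_1) \<Rightarrow> nat \<Rightarrow> 'a set" where
  "lin_combs z k = {u. \<exists>r. u = (\<Sum>t<k. r t * z t)}"

lemma is_ideal_lin_combs: "is_ideal (lin_combs z k)"
  unfolding is_ideal_def lin_combs_def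
proof (intro conjI ballI allI)
  show "0 \<in> {u. \<exists>r. u = (\<Sum>t<k. r t * z t)}"
    by (intro CollectI exI[of _ "\<lambda>_. 0"]) simp
next
  fix u v assume "u \<in> {u. \<exists>r. u = (\<Sum>t<k. r t * z t)}" "v \<in> {u. \<exists>r. u = (\<Sum>t<k. r t * z t)}"
  then obtain r r' where "u = (\<Sum>t<k. r t * z t)" "v = (\<Sum>t<k. r' t * z t)" by blast
  then have "u + v = (\<Sum>t<k. (r t + r' t) * z t)" by (simp add: sum.distrib distrib_right)
  then show "u + v \<in> {u. \<exists>r. u = (\<Sum>t<k. r t * z t)}" by (intro CollectI exI)
next
  fix s u assume "u \<in> {u. \<exists>r. u = (\<Sum>t<k. r t * z t)}"
  then obtain r where "u = (\<Sum>t<k. r t * z t)" by blast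
  then have "s * u = (\<Sum>t<k. (s * r t) * z t)" by (simp add: sum_distrib_left mult.assoc)
  then show "s * u \<in> {u. \<exists>r. u = (\<Sum>t<k. r t * z t)}" by (intro CollectI exI)
qed

lemma lin_combs_subset:
  assumes "is_ideal J" "\<And>t. t < k \<Longrightarrow> z t \<in> J"
  shows "lin_combs z k \<subseteq> J"
  using assms unfolding lin_combs_def by (auto intro!: is_ideal_sum simp: is_ideal_def)

lemma lin_combs_minus_term:
  assumes "i < k"
  shows "(\<Sum>t<k. f t * x t) - f i * x i \<in> lin_combs (x(i := 0)) k"
proof -
  have "(\<Sum>t<k. f t * x t) = (\<Sum>t<k. f t * (x(i := 0)) t + (if t = i then f i * x i else 0))"
    by (rule sum.cong) auto
  also have "\<dots> = (\<Sum>t<k. f t * (x(i := 0)) t) + f i * x i"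
    using assms by (simp add: sum.distrib)
  finally show ?thesis unfolding lin_combs_def by auto
qed

lemma is_ideal_Union_chain:
  assumes "C \<in> chains {J. is_ideal J}" "C \<noteq> {}"
  shows "is_ideal (\<Union>C)"
  unfolding is_ideal_def
proof (intro conjI ballI allI)
  have ideals: "\<And>X. X \<in> C \<Longrightarrow> is_ideal X" using chainsD2[OF assms(1)] by blast
  show "0 \<in> \<Union>C" using assms(2) ideals unfolding is_ideal_def by blast
  fix u v assume "u \<in> \<Union>C" "v \<in> \<Union>C"
  then obtain X Y where XY: "X \<in> C" "Y \<in> C" "u \<in> X" "v \<in> Y" by blast
  from chainsD[OF assms(1) XY(1,2)] obtain Z where "Z \<in> C" "u \<in> Z" "v \<in> Z"
    using XY by blast
  then show "u + v \<in> \<Union>C" using ideals unfolding is_ideal_def by blast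
next
  fix r u assume "u \<in> \<Union>C"
  then show "r * u \<in> \<Union>C"
    using chainsD2[OF assms(1)] unfolding is_ideal_def by blast
qed

lemma exists_maximal_ideal_superset:
  fixes A :: "'a::comm_ring_1 set"
  assumes "is_ideal A" "1 \<notin> A"
  shows "\<exists>M. maximal_ideal M \<and> A \<subseteq> M"
proof -
  define S where "S = {J::'a set. is_ideal J \<and> A \<subseteq> J \<and> 1 \<notin> J}"
  have "\<exists>U\<in>S. \<forall>X\<in>C. X \<subseteq> U" if C: "C \<in> chains S" for C
  proof (cases "C = {}")
    case False
    have "C \<in> chains {J. is_ideal J}" using C unfolding chains_def S_def by blast
    then have "\<Union>C \<in> S"
      using is_ideal_Union_chain False chainsD2[OF C] unfolding S_def by blast
    then show ?thesis by blast
  qed (use assms S_def in auto)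
  from Zorn_Lemma2[OF ballI[OF this]]
  obtain M where M: "M \<in> S" and max: "\<And>X. X \<in> S \<Longrightarrow> M \<subseteq> X \<Longrightarrow> X = M" by blast
  have "J = M \<or> J = UNIV" if "is_ideal J" "M \<subseteq> J" for J
  proof (cases "1 \<in> J")
    case True
    then have "r * 1 \<in> J" for r using \<open>is_ideal J\<close> unfolding is_ideal_def by blast
    then show ?thesis by auto
  qed (use that M max S_def in auto)
  with M show ?thesis unfolding maximal_ideal_def S_def by blast
qed

lemma equiv_congruence_mod_ideal:
  assumes "is_ideal M"
  shows "equiv UNIV {(x, y). x - y \<in> M}"
proof (rule equivI)
  show "{(x, y). x - y \<in> M} \<subseteq> UNIV \<times> UNIV" by simp
  show "refl {(x, y). x - y \<in> M}"
    by (rule refl_onI) (use assms in \<open>auto simp: is_ideal_def\<close>)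
  have "(-1) * (x - y) \<in> M" if "x - y \<in> M" for x y
    using assms that unfolding is_ideal_def by blast
  then show "sym {(x, y). x - y \<in> M}"
    by (auto simp: sym_def)
  show "trans {(x, y). x - y \<in> M}"
  proof (rule transI, clarsimp)
    fix x y z assume "x - y \<in> M" "y - z \<in> M"
    then have "(x - y) + (y - z) \<in> M" using assms unfolding is_ideal_def by blast
    then show "x - z \<in> M" by simp
  qed
qed

lemma incongruent_seq_of_infinite_quotient:
  fixes M :: "'a::comm_ring_1 set"
  assumes "is_ideal M" "infinite (quotient_ring_set M)"
  shows "\<exists>c::nat \<Rightarrow> 'a. \<forall>j j'. j \<noteq> j' \<longrightarrow> c j - c j' \<notin> M"
proof -
  define rel where "rel = {(x::'a, y). x - y \<in> M}"
  obtain f :: "nat \<Rightarrow> 'a set" where f: "inj f" "range f \<subseteq> UNIV // rel"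
    using infinite_countable_subset assms(2) unfolding quotient_ring_set_def rel_def by blast
  then have "\<forall>j. \<exists>x. f j = rel `` {x}" unfolding quotient_def by blast
  then obtain c where c: "\<And>j. f j = rel `` {c j}" by metis
  have "c j - c j' \<notin> M" if "j \<noteq> j'" for j j'
  proof -
    have "rel `` {c j} \<noteq> rel `` {c j'}" using c f(1) that by (metis injD)
    then show ?thesis
      using eq_equiv_class_iff[OF equiv_congruence_mod_ideal[OF assms(1)] UNIV_I UNIV_I]
      unfolding rel_def by blast
  qed
  then show ?thesis by blast
qed

lemma incongruent_seq_mod_proper_ideal:
  fixes A :: "'a::comm_ring_1 set"
  assumes "\<And>M::'a set. maximal_ideal M \<Longrightarrow> infinite (quotient_ring_set M)"
    and "is_ideal A" "1 \<notin> A"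
  shows "\<exists>c::nat \<Rightarrow> 'a. \<forall>j j'. j \<noteq> j' \<longrightarrow> c j - c j' \<notin> A"
proof -
  obtain M where M: "maximal_ideal M" "A \<subseteq> M"
    using exists_maximal_ideal_superset[OF assms(2,3)] by blast
  then have "is_ideal M" unfolding maximal_ideal_def by blast
  then show ?thesis
    using incongruent_seq_of_infinite_quotient assms(1)[OF M(1)] M(2) by blast
qed

fun coeff_sum_term :: "nat \<Rightarrow> rterm" where
  "coeff_sum_term 0 = RVar 1"
| "coeff_sum_term (Suc k) = RAdd (coeff_sum_term k) (RMul (RVar (2*k+3)) (RVar (2*k+2)))"

fun ex_coeffs :: "nat \<Rightarrow> rform \<Rightarrow> rform" where
  "ex_coeffs 0 f = f"
| "ex_coeffs (Suc k) f = RExists (2*k+3) (ex_coeffs k f)"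

text \<open>Variable 0 is y, variable 1 is w, variable 2t+2 is z_t and variable 2t+3 is the
  bound coefficient of z_t, so that the formula says y \<in> w + (z_0, ..., z_(k-1)).\<close>

definition coset_form :: "nat \<Rightarrow> rform" where
  "coset_form k = ex_coeffs k (REq (RVar 0) (coeff_sum_term k))"

definition with_coeffs :: "(nat \<Rightarrow> 'a) \<Rightarrow> (nat \<Rightarrow> 'a) \<Rightarrow> nat \<Rightarrow> nat \<Rightarrow> 'a" where
  "with_coeffs e r k = (\<lambda>v. if odd v \<and> 3 \<le> v \<and> (v - 3) div 2 < k then r ((v - 3) div 2) else e v)"

lemma with_coeffs_Suc: "with_coeffs (e(2*k+3 := a)) r k = with_coeffs e (r(k := a)) (Suc k)"
proof
  fix v
  show "with_coeffs (e(2*k+3 := a)) r k v = with_coeffs e (r(k := a)) (Suc k) v"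
  proof (cases "odd v \<and> 3 \<le> v")
    case True
    then have "v = 2 * ((v - 3) div 2) + 3" by presburger
    then show ?thesis using True by (auto simp: with_coeffs_def)
  qed (auto simp: with_coeffs_def)
qed

lemma sat_ex_coeffs: "sat e (ex_coeffs k F) \<longleftrightarrow> (\<exists>r. sat (with_coeffs e r k) F)"
proof (induction k arbitrary: e)
  case 0
  have "with_coeffs e r 0 = e" for r :: "nat \<Rightarrow> 'a" by (auto simp: with_coeffs_def)
  then show ?case by simp
next
  case (Suc k)
  have "sat e (ex_coeffs (Suc k) F) \<longleftrightarrow> (\<exists>a r. sat (with_coeffs e (r(k := a)) (Suc k)) F)"
    by (simp only: ex_coeffs.simps sat.simps Suc.IH with_coeffs_Suc)
  also have "\<dots> \<longleftrightarrow> (\<exists>r. sat (with_coeffs e r (Suc k)) F)"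
    by (metis fun_upd_triv)
  finally show ?case .
qed

lemma teval_coeff_sum_term:
  "k' \<le> k \<Longrightarrow> teval (with_coeffs e r k) (coeff_sum_term k') = e 1 + (\<Sum>t<k'. r t * e (2*t+2))"
  by (induction k') (auto simp: with_coeffs_def algebra_simps)

lemma sat_coset_form:
  "sat e (coset_form k) \<longleftrightarrow> e 0 - e 1 \<in> lin_combs (\<lambda>t. e (2*t+2)) k"
proof -
  have "with_coeffs e r k 0 = e 0" for r :: "nat \<Rightarrow> 'a" by (simp add: with_coeffs_def)
  then show ?thesis
    unfolding coset_form_def sat_ex_coeffs lin_combs_def
    by (auto simp: teval_coeff_sum_term algebra_simps)
qed

lemma lin_combs_upd_zero_subset:
  "lin_combs (x(i := 0)) (Suc n) \<subseteq> gen_ideal (x ` ({0..n} - {i}))"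
proof (rule lin_combs_subset[OF gen_ideal_is_ideal])
  fix t assume "t < Suc n"
  show "(x(i := 0)) t \<in> gen_ideal (x ` ({0..n} - {i}))"
  proof (cases "t = i")
    case True
    then show ?thesis
      using gen_ideal_is_ideal[of "x ` ({0..n} - {i})"] unfolding is_ideal_def by auto
  next
    case False
    then have "x t \<in> x ` ({0..n} - {i})" using \<open>t < Suc n\<close> by auto
    then show ?thesis using False gen_ideal_superset[of "x ` ({0..n} - {i})"] by auto
  qed
qed

lemma ict_pattern_of_incongruent:
  fixes x :: "nat \<Rightarrow> 'a::comm_ring_1" and C :: "nat \<Rightarrow> nat \<Rightarrow> 'a"
  assumes C: "\<And>i j j'. i \<le> n \<Longrightarrow> j \<noteq> j' \<Longrightarrow> (C i j - C i j') * x i \<notin> lin_combs (x(i := 0)) (Suc n)"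
  shows "ict_pattern TYPE('a) (Suc n)"
proof -
  define I where "I i = lin_combs (x(i := 0)) (Suc n)" for i
  have I: "is_ideal (I i)" for i
    unfolding I_def by (rule is_ideal_lin_combs)
  define b where "b i j v = (if v = 1 then C i j * x i else (x(i := 0)) ((v - 2) div 2))"
    for i j v
  have sat_b: "sat ((b i j)(0 := a)) (coset_form (Suc n)) \<longleftrightarrow> a - C i j * x i \<in> I i"
    for i j a
  proof -
    have "(\<lambda>t. ((b i j)(0 := a)) (2*t+2)) = x(i := 0)" "((b i j)(0 := a)) 1 = C i j * x i"
      by (auto simp: b_def)
    then show ?thesis by (simp only: sat_coset_form I_def fun_upd_same)
  qed
  show ?thesis
    unfolding ict_pattern_def
  proof (intro exI[of _ "\<lambda>_. coset_form (Suc n)"] exI[of _ b] allI impI)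
    fix m and \<eta> :: "nat \<Rightarrow> nat"
    define a where "a = (\<Sum>t<Suc n. C t (\<eta> t) * x t)"
    have "a - C i j * x i \<in> I i \<longleftrightarrow> j = \<eta> i" if "i < Suc n" for i j
    proof -
      have "a - C i (\<eta> i) * x i \<in> I i"
        unfolding a_def I_def using that by (rule lin_combs_minus_term)
      then have "a - C i j * x i \<in> I i \<longleftrightarrow> (C i (\<eta> i) - C i j) * x i \<in> I i"
        by (rule coset_eq_iff[OF I])
      moreover have "0 \<in> I i" using I unfolding is_ideal_def by blast
      ultimately show ?thesis using C[of i "\<eta> i" j] that unfolding I_def by auto
    qed
    then have "\<forall>i<Suc n. \<forall>j<m. sat ((b i j)(0 := a)) (coset_form (Suc n)) \<longleftrightarrow> j = \<eta> i"
      by (simp add: sat_b)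
    then show "\<exists>a. \<forall>i<Suc n. \<forall>j<m. sat ((b i j)(0 := a)) (coset_form (Suc n)) \<longleftrightarrow> j = \<eta> i"
      by blast
  qed
qed

lemma ict_pattern_of_independent:
  fixes x :: "nat \<Rightarrow> 'a::comm_ring_1"
  assumes maxinf: "\<And>M::'a set. maximal_ideal M \<Longrightarrow> infinite (quotient_ring_set M)"
    and indep: "\<And>i. i \<le> n \<Longrightarrow> x i \<notin> gen_ideal (x ` ({0..n} - {i}))"
  shows "ict_pattern TYPE('a) (Suc n)"
proof -
  define Ann where "Ann i = {c. c * x i \<in> lin_combs (x(i := 0)) (Suc n)}" for i
  have Ann: "is_ideal (Ann i)" for i
    unfolding Ann_def by (rule is_ideal_colon[OF is_ideal_lin_combs])
  have Ann_proper: "1 \<notin> Ann i" if "i \<le> n" for i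
    using indep[OF that] lin_combs_upd_zero_subset unfolding Ann_def by auto
  have "\<exists>c::nat \<Rightarrow> 'a. \<forall>j j'. j \<noteq> j' \<longrightarrow> c j - c j' \<notin> Ann i" if "i \<le> n" for i
    by (rule incongruent_seq_mod_proper_ideal[OF maxinf Ann Ann_proper[OF that]])
  then have "\<forall>i. \<exists>c::nat \<Rightarrow> 'a. i \<le> n \<longrightarrow> (\<forall>j j'. j \<noteq> j' \<longrightarrow> c j - c j' \<notin> Ann i)"
    by blast
  from choice[OF this] obtain C :: "nat \<Rightarrow> nat \<Rightarrow> 'a"
    where "\<And>i j j'. i \<le> n \<Longrightarrow> j \<noteq> j' \<Longrightarrow> C i j - C i j' \<notin> Ann i"
    by blast
  then show ?thesis
    unfolding Ann_def by (intro ict_pattern_of_incongruent[of n C x]) auto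
qed

lemma not_breadth_le_imp_independent:
  assumes "\<not> breadth_le TYPE('a::comm_ring_1) n"
  obtains x :: "nat \<Rightarrow> 'a::comm_ring_1" where "\<And>i. i \<le> n \<Longrightarrow> x i \<notin> gen_ideal (x ` ({0..n} - {i}))"
proof -
  obtain x :: "nat \<Rightarrow> 'a"
    where x: "\<And>i. i \<le> n \<Longrightarrow> gen_ideal (x ` {0..n}) \<noteq> gen_ideal (x ` ({0..n} - {i}))"
    using assms unfolding breadth_le_def by blast
  have "x ` {0..n} = insert (x i) (x ` ({0..n} - {i}))" if "i \<le> n" for i
    using that by auto
  then have "x i \<notin> gen_ideal (x ` ({0..n} - {i}))" if "i \<le> n" for i
    using x[OF that] gen_ideal_insert_absorb that by metis
  then show ?thesis using that by blast
qed

lemma ict_pattern_le_dp_rank: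
  assumes "dp_finite TYPE('a::comm_ring_1)" "ict_pattern TYPE('a) n"
  shows "n \<le> dp_rank TYPE('a)"
proof -
  obtain B where "\<And>n. ict_pattern TYPE('a) n \<Longrightarrow> n \<le> B"
    using assms(1) unfolding dp_finite_def by blast
  then show ?thesis unfolding dp_rank_def using assms(2) by (rule Greatest_le_nat[rotated])
qed

theorem lemma5p6:
  assumes "dp_finite TYPE('a::comm_ring_1)"
    and "\<And>M::'a set. maximal_ideal M \<Longrightarrow> infinite (quotient_ring_set M)"
  shows "breadth_le TYPE('a) (dp_rank TYPE('a))"
proof (rule ccontr)
  assume "\<not> breadth_le TYPE('a) (dp_rank TYPE('a))"
  then obtain x :: "nat \<Rightarrow> 'a"
    where "\<And>i. i \<le> dp_rank TYPE('a) \<Longrightarrow> x i \<notin> gen_ideal (x ` ({0..dp_rank TYPE('a)} - {i}))"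
    using not_breadth_le_imp_independent by blast
  then have "ict_pattern TYPE('a) (Suc (dp_rank TYPE('a)))"
    using ict_pattern_of_independent[OF assms(2)] by blast
  then show False using ict_pattern_le_dp_rank[OF assms(1)] Suc_n_not_le_n by blast
qed

end
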